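(* Let $p$ be a prime and $k$ a positive integer. (1) If $p>2$, there are exactly two conjugacy classes of involutions in $\operatorname{Hol}(\mathbb{Z}/p^k\mathbb{Z})$, with representatives $\lambda(1,0)$ and $\lambda(-1,0)$. (2) There are exactly two conjugacy classes of involutions in $\operatorname{Hol}(\mathbb{Z}/2\mathbb{Z})$, with representatives $\lambda(1,0),\lambda(1,1)$. (3) There are exactly four conjugacy classes of involutions in $\operatorname{Hol}(\mathbb{Z}/4\mathbb{Z})$, with representatives $\lambda(1,0),\lambda(1,2),\lambda(-1,0),\lambda(-1,1)$. (4) For $k\ge3$ there are exactly six conjugacy classes of involutions in $\operatorname{Hol}(\mathbb{Z}/2^k\mathbb{Z})$, with representatives $\lambda(1,0),\lambda(1,2^{k-1}),\lambda(-1,0),\lambda(-1,1),\lambda(2^{k-1}-1,0),\lambda(2^{k-1}+1,0)$. Consequently, for every positive integer $m$, the number of conjugacy classes of involutions in $\operatorname{Hol}(\mathbb{Z}/m\mathbb{Z})$ is $\min(6,2\nu_2(m))\cdot2^{|\{p>2\text{ prime}:p\mid m\}|}$.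
   Context: $\operatorname{Hol}(\mathbb{Z}/m\mathbb{Z})$ is the group of permutations $\lambda(a,b):x\mapsto ax+b$ of $\mathbb{Z}/m\mathbb{Z}$ with $a$ a unit mod $m$ and $b\in\mathbb{Z}/m\mathbb{Z}$. An involution of a group is an element $g$ with $g^2=1$ (the identity counts as an involution). $\nu_2(m)$ is the exponent of $2$ in $m$. *)

theory Defs
  imports "HOL-Algebra.Group" "HOL-Computational_Algebra.Primes" "HOL-Library.FuncSet"
begin

text \<open>The affine permutation lambda(a,b): x maps to a*x+b of Z/mZ, with Z/mZ
  represented by the residues {0..<m}; outside the carrier the function is
  undefined (restrict), so that equality of maps is equality as permutations.\<close>
definition aff :: "int \<Rightarrow> int \<Rightarrow> int \<Rightarrow> (int \<Rightarrow> int)" where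
  "aff m a b = (\<lambda>x\<in>{0..<m}. (a * x + b) mod m)"

definition Hol :: "int \<Rightarrow> (int \<Rightarrow> int) monoid" where
  "Hol m = \<lparr> carrier = {aff m a b | a b. coprime a m},
             monoid.mult = (\<lambda>f g. compose {0..<m} f g),
             one = aff m 1 0 \<rparr>"

definition involutions :: "('a, 'b) monoid_scheme \<Rightarrow> 'a set" where
  "involutions G = {g \<in> carrier G. g \<otimes>\<^bsub>G\<^esub> g = \<one>\<^bsub>G\<^esub>}"

definition conj_class :: "('a, 'b) monoid_scheme \<Rightarrow> 'a \<Rightarrow> 'a set" where
  "conj_class G g = {inv\<^bsub>G\<^esub> h \<otimes>\<^bsub>G\<^esub> g \<otimes>\<^bsub>G\<^esub> h | h. h \<in> carrier G}"

definition involution_classes :: "('a, 'b) monoid_scheme \<Rightarrow> 'a set set" where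
  "involution_classes G = conj_class G ` involutions G"

end

theory Submission
  imports Defs "HOL-Number_Theory.Cong"
begin

text \<open>Conjugating lambda(a, b) by lambda(c, d) gives lambda(a, c^-1 (b + (a - 1) d)). Since units
  modulo a divisor of m lift to units modulo m, the class of lambda(a, b) is therefore determined by
  a and by gcd(b, a - 1, m). For an involution this yields a normal form (a, e) with
  e | gcd(a - 1, m) and m | (a + 1) e. By the Chinese remainder theorem the number of normal forms
  is multiplicative in m, and for a prime power m they are listed by hand: a^2 = 1 forces
  a = 1 or -1 modulo p^k for odd p, and modulo 2^(k-1) for p = 2.\<close>

section \<open>The holomorph as a group of affine maps\<close>

lemma aff_apply: "x \<in> {0..<m} \<Longrightarrow> aff m a b x = (a * x + b) mod m"
  by (simp add: aff_def)

lemma aff_cong: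
  assumes "[a = a'] (mod m)" "[b = b'] (mod m)"
  shows "aff m a b = aff m a' b'"
proof -
  have "[a * x + b = a' * x + b'] (mod m)" for x
    using assms by (intro cong_add cong_mult cong_refl)
  then show ?thesis
    unfolding aff_def cong_def by auto
qed

lemma aff_eq_iff:
  assumes "m > 0"
  shows "aff m a b = aff m a' b' \<longleftrightarrow> [a = a'] (mod m) \<and> [b = b'] (mod m)"
proof
  assume eq: "aff m a b = aff m a' b'"
  show "[a = a'] (mod m) \<and> [b = b'] (mod m)"
  proof (cases "m = 1")
    case False
    with assms have "aff m a b 0 = aff m a' b' 0" "aff m a b 1 = aff m a' b' 1"
      using eq by auto
    with assms False have "[b = b'] (mod m)" "[a + b = a' + b'] (mod m)"
      by (auto simp: aff_apply cong_def)
    then show ?thesis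
      using cong_diff by fastforce
  qed (simp add: cong_def)
qed (auto intro: aff_cong)

lemma compose_aff:
  assumes "m > 0"
  shows "compose {0..<m} (aff m a b) (aff m c d) = aff m (a * c) (a * d + b)"
proof
  fix x
  have "(a * ((c * x + d) mod m) + b) mod m = (a * (c * x + d) + b) mod m"
    by (metis mod_add_left_eq mod_mult_right_eq)
  then show "compose {0..<m} (aff m a b) (aff m c d) x = aff m (a * c) (a * d + b) x"
    using assms by (auto simp: compose_def aff_def algebra_simps)
qed

lemma carrier_Hol: "carrier (Hol m) = {aff m a b |a b. coprime a m}"
  and mult_Hol: "f \<otimes>\<^bsub>Hol m\<^esub> g = compose {0..<m} f g"
  and one_Hol: "\<one>\<^bsub>Hol m\<^esub> = aff m 1 0"
  by (simp_all add: Hol_def)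

lemma aff_in_Hol: "coprime a m \<Longrightarrow> aff m a b \<in> carrier (Hol m)"
  by (auto simp: carrier_Hol)

lemma coprime_inverse_modE:
  fixes a m :: int
  assumes "coprime a m"
  obtains a' where "[a * a' = 1] (mod m)" "coprime a' m"
  by (metis assms cong_solve_coprime_int coprime_iff_invertible_int mult.commute)

lemma aff_inverse:
  assumes "m > 0" "[c * c' = 1] (mod m)"
  shows "aff m c' (- (c' * d)) \<otimes>\<^bsub>Hol m\<^esub> aff m c d = \<one>\<^bsub>Hol m\<^esub>"
proof -
  have "[c' * c = 1] (mod m)"
    using assms(2) by (simp add: mult.commute)
  then have "aff m (c' * c) (c' * d + - (c' * d)) = aff m 1 0"
    by (intro aff_cong) auto
  then show ?thesis
    using assms(1) by (simp add: mult_Hol one_Hol compose_aff)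
qed

lemma group_Hol:
  assumes "m > 0"
  shows "group (Hol m)"
proof (rule groupI)
  fix f g h
  assume "f \<in> carrier (Hol m)" "g \<in> carrier (Hol m)" "h \<in> carrier (Hol m)"
  then show "f \<otimes>\<^bsub>Hol m\<^esub> g \<otimes>\<^bsub>Hol m\<^esub> h = f \<otimes>\<^bsub>Hol m\<^esub> (g \<otimes>\<^bsub>Hol m\<^esub> h)"
    using assms by (auto simp: carrier_Hol mult_Hol compose_aff algebra_simps)
next
  fix f g
  assume "f \<in> carrier (Hol m)" "g \<in> carrier (Hol m)"
  then obtain a b c d where "f = aff m a b" "g = aff m c d" "coprime a m" "coprime c m"
    by (auto simp: carrier_Hol)
  then show "f \<otimes>\<^bsub>Hol m\<^esub> g \<in> carrier (Hol m)"
    using assms by (simp add: mult_Hol compose_aff aff_in_Hol)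
next
  fix f
  assume f: "f \<in> carrier (Hol m)"
  then show "\<one>\<^bsub>Hol m\<^esub> \<otimes>\<^bsub>Hol m\<^esub> f = f"
    using assms by (auto simp: carrier_Hol mult_Hol one_Hol compose_aff)
  from f obtain c d where f_eq: "f = aff m c d" and c: "coprime c m"
    by (auto simp: carrier_Hol)
  from c obtain c' where "[c * c' = 1] (mod m)" "coprime c' m"
    by (rule coprime_inverse_modE)
  then show "\<exists>g\<in>carrier (Hol m). g \<otimes>\<^bsub>Hol m\<^esub> f = \<one>\<^bsub>Hol m\<^esub>"
    unfolding f_eq using aff_inverse[OF assms] aff_in_Hol by blast
qed (auto simp: one_Hol intro: aff_in_Hol)

lemma inv_Hol_aff:
  assumes "m > 0" "coprime c m" "[c * c' = 1] (mod m)" "coprime c' m"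
  shows "inv\<^bsub>Hol m\<^esub> (aff m c d) = aff m c' (- (c' * d))"
  using group.inv_equality[OF group_Hol[OF assms(1)] aff_inverse[OF assms(1,3)]]
    aff_in_Hol assms(2,4) by blast

lemma conj_Hol_aff:
  assumes "m > 0" "coprime c m" "[c * c' = 1] (mod m)" "coprime c' m"
  shows "inv\<^bsub>Hol m\<^esub> (aff m c d) \<otimes>\<^bsub>Hol m\<^esub> aff m a b \<otimes>\<^bsub>Hol m\<^esub> aff m c d
           = aff m a (c' * (b + (a - 1) * d))"
proof -
  have "[c' * a * c = a * (c * c')] (mod m)"
    by (simp add: algebra_simps)
  also have "[a * (c * c') = a] (mod m)"
    using cong_scalar_left[OF assms(3), of a] by simp
  finally have "aff m (c' * a * c) (c' * (a * d + b) + - (c' * d))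
      = aff m a (c' * (b + (a - 1) * d))"
    by (intro aff_cong) (auto simp: algebra_simps)
  then show ?thesis
    using assms by (simp add: inv_Hol_aff mult_Hol compose_aff algebra_simps)
qed

lemma conj_class_self:
  fixes G (structure)
  assumes "group G" "g \<in> carrier G"
  shows "g \<in> conj_class G g"
proof -
  interpret group G by (rule assms(1))
  have "g = inv \<one> \<otimes> g \<otimes> \<one>"
    using assms(2) by simp
  then show ?thesis
    unfolding conj_class_def by blast
qed

lemma conj_class_eq_iff:
  fixes G (structure)
  assumes G: "group G" and g: "g \<in> carrier G" and x: "x \<in> carrier G"
  shows "conj_class G x = conj_class G g \<longleftrightarrow> x \<in> conj_class G g"
proof
  assume "conj_class G x = conj_class G g"
  then show "x \<in> conj_class G g"
    using conj_class_self[OF G x] by simp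
next
  interpret group G by (rule G)
  assume "x \<in> conj_class G g"
  then obtain h where h: "h \<in> carrier G" and x_eq: "x = inv h \<otimes> g \<otimes> h"
    by (auto simp: conj_class_def)
  have cancel: "h \<otimes> (inv h \<otimes> y) = y" if "y \<in> carrier G" for y
    using h that by (simp add: m_assoc[symmetric])
  show "conj_class G x = conj_class G g"
  proof (intro equalityI subsetI)
    fix y
    assume "y \<in> conj_class G x"
    then obtain k where k: "k \<in> carrier G" and y: "y = inv k \<otimes> x \<otimes> k"
      by (auto simp: conj_class_def)
    then have "y = inv (h \<otimes> k) \<otimes> g \<otimes> (h \<otimes> k)"
      using g h by (simp add: x_eq inv_mult_group m_assoc)
    with h k show "y \<in> conj_class G g"
      unfolding conj_class_def by blast
  next
    fix y
    assume "y \<in> conj_class G g"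
    then obtain k where k: "k \<in> carrier G" and y: "y = inv k \<otimes> g \<otimes> k"
      by (auto simp: conj_class_def)
    then have "y = inv (inv h \<otimes> k) \<otimes> x \<otimes> (inv h \<otimes> k)"
      using g h by (simp add: x_eq inv_mult_group m_assoc cancel)
    with h k show "y \<in> conj_class G x"
      unfolding conj_class_def by blast
  qed
qed

lemma conj_class_Hol_aff:
  assumes "m > 0"
  shows "conj_class (Hol m) (aff m a b) = {aff m a (c * (b + (a - 1) * d)) |c d. coprime c m}"
proof (intro equalityI subsetI)
  fix f
  assume "f \<in> conj_class (Hol m) (aff m a b)"
  then obtain c d where f: "f = inv\<^bsub>Hol m\<^esub> (aff m c d) \<otimes>\<^bsub>Hol m\<^esub> aff m a b \<otimes>\<^bsub>Hol m\<^esub> aff m c d"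
    and c: "coprime c m"
    by (auto simp: conj_class_def carrier_Hol)
  from c obtain c' where c': "[c * c' = 1] (mod m)" "coprime c' m"
    by (rule coprime_inverse_modE)
  have "f = aff m a (c' * (b + (a - 1) * d))"
    unfolding f using conj_Hol_aff[OF assms c c'] .
  then show "f \<in> {aff m a (c * (b + (a - 1) * d)) |c d. coprime c m}"
    using c'(2) by blast
next
  fix f
  assume "f \<in> {aff m a (c * (b + (a - 1) * d)) |c d. coprime c m}"
  then obtain c d where f: "f = aff m a (c * (b + (a - 1) * d))" and c: "coprime c m"
    by blast
  from c obtain c' where c': "[c * c' = 1] (mod m)" "coprime c' m"
    by (rule coprime_inverse_modE)
  have "f = inv\<^bsub>Hol m\<^esub> (aff m c' d) \<otimes>\<^bsub>Hol m\<^esub> aff m a b \<otimes>\<^bsub>Hol m\<^esub> aff m c' d"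
    unfolding f using conj_Hol_aff[OF assms c'(2), of c] c' c by (simp add: mult.commute)
  with aff_in_Hol[OF c'(2)] show "f \<in> conj_class (Hol m) (aff m a b)"
    unfolding conj_class_def by blast
qed

section \<open>Units and gcds modulo a divisor\<close>

lemma coprimeI_prime_divisors:
  fixes c m :: int
  assumes "m \<noteq> 0" "\<And>p. prime p \<Longrightarrow> p dvd m \<Longrightarrow> \<not> p dvd c"
  shows "coprime c m"
proof (rule ccontr)
  assume "\<not> coprime c m"
  have "gcd c m \<noteq> 0"
    using assms(1) by simp
  moreover from \<open>\<not> coprime c m\<close> have "\<not> is_unit (gcd c m)"
    by (simp add: coprime_iff_gcd_eq_1 is_unit_gcd)
  ultimately obtain p where "prime p" "p dvd gcd c m"
    by (rule prime_divisorE)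
  then show False
    using assms(2) by auto
qed

lemma coprime_lift_mod_divisor:
  fixes h m c :: int
  assumes "m > 0" "h dvd m" "coprime c h"
  obtains c' where "[c' = c] (mod h)" "coprime c' m"
proof -
  define P where "P = {p. prime p \<and> p dvd m \<and> \<not> p dvd c}"
  have "finite P"
    by (rule finite_subset[of _ "{0..m}"])
      (use assms(1) in \<open>auto simp: P_def dest: zdvd_imp_le prime_ge_0_int\<close>)
  \<comment> \<open>Adding a multiple of the primes of \<open>m\<close> missing from \<open>c\<close> removes all common factors.\<close>
  define c' where "c' = c + h * \<Prod>P"
  have "\<not> p dvd c'" if p: "prime p" "p dvd m" for p
  proof (cases "p dvd c")
    case True
    then have "\<not> p dvd h"
      using assms(3) p(1) by (meson coprime_common_divisor not_prime_unit)
    moreover have "\<not> p dvd \<Prod>P"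
    proof
      assume "p dvd \<Prod>P"
      then obtain q where "q \<in> P" "p dvd q"
        using prime_dvd_prod_iff[OF \<open>finite P\<close> p(1)] by auto
      with p(1) True show False
        unfolding P_def using primes_dvd_imp_eq by blast
    qed
    ultimately have "\<not> p dvd h * \<Prod>P"
      using p(1) prime_dvd_mult_iff by blast
    with True show ?thesis
      unfolding c'_def using dvd_add_right_iff by blast
  next
    case False
    with p have "p dvd \<Prod>P"
      using \<open>finite P\<close> by (intro dvd_prodI) (auto simp: P_def)
    with False show ?thesis
      unfolding c'_def by (metis dvd_add_left_iff dvd_mult)
  qed
  then have "coprime c' m"
    using assms(1) by (intro coprimeI_prime_divisors) auto
  moreover have "[c' = c] (mod h)"
    unfolding c'_def by (simp add: cong_iff_dvd_diff)
  ultimately show ?thesis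
    using that by blast
qed

lemma ex_unit_mult_cong_if_coprime:
  fixes \<beta> \<beta>' h m :: int
  assumes "m > 0" "h dvd m" "coprime \<beta> h" "coprime \<beta>' h"
  obtains c where "coprime c m" "[c * \<beta> = \<beta>'] (mod h)"
proof -
  obtain \<beta>i where \<beta>i: "[\<beta> * \<beta>i = 1] (mod h)" "coprime \<beta>i h"
    using assms(3) by (rule coprime_inverse_modE)
  have "coprime (\<beta>' * \<beta>i) h"
    using assms(4) \<beta>i(2) by simp
  then obtain c where c: "[c = \<beta>' * \<beta>i] (mod h)" "coprime c m"
    using coprime_lift_mod_divisor[OF assms(1,2)] by blast
  have "[c * \<beta> = \<beta>' * \<beta>i * \<beta>] (mod h)"
    using c(1) by (intro cong_mult cong_refl)
  also have "[\<beta>' * \<beta>i * \<beta> = \<beta>' * 1] (mod h)"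
    using \<beta>i(1) by (metis cong_scalar_left mult.assoc mult.commute)
  finally show ?thesis
    using c(2) that by simp
qed

lemma gcd_eq_iff_unit_multiple_cong:
  fixes b b' g m :: int
  assumes "m > 0" "g dvd m"
  shows "gcd b' g = gcd b g \<longleftrightarrow> (\<exists>c. coprime c m \<and> [c * b = b'] (mod g))"
proof
  assume gcd_eq: "gcd b' g = gcd b g"
  define e where "e = gcd b g"
  have "g \<noteq> 0"
    using assms by auto
  then have "e > 0"
    unfolding e_def by simp
  obtain \<beta> where \<beta>: "b = e * \<beta>"
    unfolding e_def by (meson gcd_dvd1 dvd_def)
  obtain \<beta>' where \<beta>': "b' = e * \<beta>'"
    using gcd_eq unfolding e_def by (metis gcd_dvd1 dvd_def)
  obtain h where h: "g = e * h"
    unfolding e_def by (meson gcd_dvd2 dvd_def)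
  have "gcd b g = e * gcd \<beta> h"
    using \<open>e > 0\<close> by (simp add: \<beta> h gcd_mult_left abs_of_pos)
  then have "coprime \<beta> h"
    using \<open>e > 0\<close> \<open>g \<noteq> 0\<close> by (simp add: coprime_iff_gcd_eq_1 e_def)
  have "gcd b' g = e * gcd \<beta>' h"
    using \<open>e > 0\<close> by (simp add: \<beta>' h gcd_mult_left abs_of_pos)
  then have "coprime \<beta>' h"
    using \<open>e > 0\<close> \<open>g \<noteq> 0\<close> gcd_eq by (simp add: coprime_iff_gcd_eq_1 e_def)
  have "h dvd m"
    using h assms(2) by (metis dvd_mult_right dvd_trans mult.commute)
  then obtain c where "coprime c m" "[c * \<beta> = \<beta>'] (mod h)"
    using ex_unit_mult_cong_if_coprime assms(1) \<open>coprime \<beta> h\<close> \<open>coprime \<beta>' h\<close> by blast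
  then have "[e * (c * \<beta>) = e * \<beta>'] (mod e * h)"
    by (simp add: cong_iff_dvd_diff right_diff_distrib[symmetric])
  then have "[c * b = b'] (mod g)"
    by (simp add: \<beta> \<beta>' h ac_simps)
  with \<open>coprime c m\<close> show "\<exists>c. coprime c m \<and> [c * b = b'] (mod g)"
    by blast
next
  assume "\<exists>c. coprime c m \<and> [c * b = b'] (mod g)"
  then obtain c where c: "coprime c m" and cong: "[c * b = b'] (mod g)"
    by blast
  have "coprime g c"
    using c assms(2) by (meson coprime_commute coprime_imp_coprime dvd_trans dvd_refl)
  have "gcd b' g = gcd (c * b) g"
    using cong by (simp add: cong_gcd_eq cong_sym)
  also have "\<dots> = gcd b g"
    using \<open>coprime g c\<close> by (rule gcd_mult_left_left_cancel)
  finally show "gcd b' g = gcd b g" .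
qed

lemma cong_mod_gcd_iff:
  fixes x y n m :: int
  shows "[x = y] (mod gcd n m) \<longleftrightarrow> (\<exists>d. [x = y + n * d] (mod m))"
proof
  assume "[x = y] (mod gcd n m)"
  then obtain s where s: "x - y = gcd n m * s"
    by (auto simp: cong_iff_dvd_diff dvd_def)
  obtain u v where uv: "u * n + v * m = gcd n m"
    using bezout_int by blast
  have "x - (y + n * (u * s)) = m * (v * s)"
    using s uv[symmetric] by (simp add: algebra_simps)
  then show "\<exists>d. [x = y + n * d] (mod m)"
    by (metis cong_iff_dvd_diff dvd_triv_left)
next
  assume "\<exists>d. [x = y + n * d] (mod m)"
  then obtain d where "[x = y + n * d] (mod m)"
    by blast
  then have "[x = y + n * d] (mod gcd n m)"
    by (rule cong_dvd_modulus) simp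
  moreover have "[y + n * d = y] (mod gcd n m)"
    by (simp add: cong_iff_dvd_diff)
  ultimately show "[x = y] (mod gcd n m)"
    by (rule cong_trans)
qed

lemma ex_unit_shift_cong_iff:
  fixes b b' n m :: int
  assumes "m > 0"
  shows "(\<exists>c d. coprime c m \<and> [b' = c * (b + n * d)] (mod m))
           \<longleftrightarrow> (\<exists>c. coprime c m \<and> [c * b = b'] (mod gcd n m))"
proof
  assume "\<exists>c d. coprime c m \<and> [b' = c * (b + n * d)] (mod m)"
  then obtain c d where c: "coprime c m" and cong: "[b' = c * (b + n * d)] (mod m)"
    by blast
  have "c * (b + n * d) = c * b + n * (c * d)"
    by (simp add: algebra_simps)
  with cong have "[b' = c * b] (mod gcd n m)"
    unfolding cong_mod_gcd_iff by auto
  with c show "\<exists>c. coprime c m \<and> [c * b = b'] (mod gcd n m)"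
    using cong_sym by blast
next
  assume "\<exists>c. coprime c m \<and> [c * b = b'] (mod gcd n m)"
  then obtain c where c: "coprime c m" and "[b' = c * b] (mod gcd n m)"
    using cong_sym by blast
  then obtain d where "[b' = c * b + n * d] (mod m)"
    unfolding cong_mod_gcd_iff by blast
  from c obtain c' where c': "[c * c' = 1] (mod m)"
    by (rule coprime_inverse_modE)
  have "[n * d = n * d * (c * c')] (mod m)"
    using cong_scalar_left[OF cong_sym[OF c'], of "n * d"] by simp
  then have "[c * b + n * d = c * b + n * d * (c * c')] (mod m)"
    by (rule cong_add[OF cong_refl])
  also have "c * b + n * d * (c * c') = c * (b + n * (c' * d))"
    by (simp add: algebra_simps)
  finally have "[c * b + n * d = c * (b + n * (c' * d))] (mod m)" .
  with \<open>[b' = c * b + n * d] (mod m)\<close> have "[b' = c * (b + n * (c' * d))] (mod m)"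
    by (rule cong_trans)
  with c show "\<exists>c d. coprime c m \<and> [b' = c * (b + n * d)] (mod m)"
    by blast
qed

section \<open>The conjugacy criterion\<close>

lemma aff_mem_conj_class_iff:
  assumes "m > 0"
  shows "aff m a' b' \<in> conj_class (Hol m) (aff m a b)
           \<longleftrightarrow> [a' = a] (mod m) \<and> gcd b' (gcd (a - 1) m) = gcd b (gcd (a - 1) m)"
proof -
  have "aff m a' b' \<in> conj_class (Hol m) (aff m a b)
          \<longleftrightarrow> [a' = a] (mod m) \<and> (\<exists>c d. coprime c m \<and> [b' = c * (b + (a - 1) * d)] (mod m))"
    using assms by (auto simp: conj_class_Hol_aff aff_eq_iff)
  also have "\<dots> \<longleftrightarrow> [a' = a] (mod m) \<and> (\<exists>c. coprime c m \<and> [c * b = b'] (mod gcd (a - 1) m))"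
    using ex_unit_shift_cong_iff[OF assms] by blast
  also have "\<dots> \<longleftrightarrow> [a' = a] (mod m) \<and> gcd b' (gcd (a - 1) m) = gcd b (gcd (a - 1) m)"
    using gcd_eq_iff_unit_multiple_cong[OF assms] by simp
  finally show ?thesis .
qed

section \<open>Normal forms of involutions\<close>

text \<open>A pair \<open>(a, e)\<close> stands for the class of \<open>\<lambda>(a, e)\<close>; in the class of an involution
  \<open>\<lambda>(a, b)\<close> the second component is the invariant \<open>gcd(b, a - 1, m)\<close>.\<close>

definition involution_data :: "int \<Rightarrow> (int \<times> int) set" where
  "involution_data m =
     {(a, e). 0 \<le> a \<and> a < m \<and> 0 < e \<and> e dvd m \<and> e dvd a - 1 \<and> m dvd (a + 1) * e}"

definition aff_normal_form :: "int \<Rightarrow> int \<times> int \<Rightarrow> int \<times> int" where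
  "aff_normal_form m = (\<lambda>(a, b). (a mod m, gcd b (gcd (a - 1) m)))"

definition aff_class :: "int \<Rightarrow> int \<times> int \<Rightarrow> (int \<Rightarrow> int) set" where
  "aff_class m = (\<lambda>(a, b). conj_class (Hol m) (aff m a b))"

lemma aff_class_apply [simp]: "aff_class m (a, b) = conj_class (Hol m) (aff m a b)"
  by (simp add: aff_class_def)

lemma aff_normal_form_apply [simp]:
  "aff_normal_form m (a, b) = (a mod m, gcd b (gcd (a - 1) m))"
  by (simp add: aff_normal_form_def)

lemma mem_involution_data_iff:
  "(a, e) \<in> involution_data m \<longleftrightarrow>
     0 \<le> a \<and> a < m \<and> 0 < e \<and> e dvd m \<and> e dvd a - 1 \<and> m dvd (a + 1) * e"
  by (simp add: involution_data_def)

lemma involution_data_dvd_square_minus_one: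
  assumes "(a, e) \<in> involution_data m"
  shows "m dvd (a - 1) * (a + 1)"
proof -
  have "(a + 1) * e dvd (a + 1) * (a - 1)"
    using assms by (simp add: mem_involution_data_iff)
  then show ?thesis
    using assms by (metis dvd_trans mem_involution_data_iff mult.commute)
qed

lemma coprime_if_dvd_square_minus_one:
  fixes a m :: int
  assumes "m dvd (a - 1) * (a + 1)"
  shows "coprime a m"
proof -
  have "[a * a = 1] (mod m)"
    using assms by (simp add: cong_iff_dvd_diff algebra_simps)
  then show ?thesis
    using coprime_iff_invertible_int by blast
qed

lemma involutions_Hol:
  assumes "m > 0"
  shows "involutions (Hol m) = {aff m a b |a b. m dvd (a - 1) * (a + 1) \<and> m dvd (a + 1) * b}"
proof -
  have "aff m a b \<otimes>\<^bsub>Hol m\<^esub> aff m a b = \<one>\<^bsub>Hol m\<^esub>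
          \<longleftrightarrow> m dvd (a - 1) * (a + 1) \<and> m dvd (a + 1) * b" for a b
  proof -
    have "(a - 1) * (a + 1) = a * a - 1" "(a + 1) * b = a * b + b"
      by (simp_all add: algebra_simps)
    then show ?thesis
      using assms by (simp add: mult_Hol one_Hol compose_aff aff_eq_iff cong_iff_dvd_diff)
  qed
  then show ?thesis
    unfolding involutions_def carrier_Hol using coprime_if_dvd_square_minus_one by blast
qed

lemma aff_normal_form_mem_involution_data:
  fixes m a b :: int
  assumes m: "m > 0" and sq: "m dvd (a - 1) * (a + 1)" and b: "m dvd (a + 1) * b"
  shows "aff_normal_form m (a, b) \<in> involution_data m"
proof -
  define g where "g = gcd (a - 1) m"
  define e where "e = gcd b g"
  have "g dvd (a - 1) - m * (a div m)"
    unfolding g_def by (simp add: dvd_diff)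
  moreover have "(a - 1) - m * (a div m) = a mod m - 1"
    by (simp add: minus_div_mult_eq_mod[symmetric] algebra_simps)
  ultimately have "g dvd a mod m - 1"
    by simp
  then have "e dvd a mod m - 1"
    unfolding e_def using dvd_trans gcd_dvd2 by blast
  \<comment> \<open>Both \<open>b\<close> and \<open>g\<close> are killed by \<open>a + 1\<close> modulo \<open>m\<close>, hence so is their gcd \<open>e\<close>.\<close>
  obtain u v where uv: "u * (a - 1) + v * m = g"
    using bezout_int[of "a - 1" m] unfolding g_def by blast
  have "(a + 1) * g = (a + 1) * (u * (a - 1) + v * m)"
    by (simp add: uv)
  also have "\<dots> = u * ((a - 1) * (a + 1)) + m * ((a + 1) * v)"
    by (simp add: algebra_simps)
  finally have "(a + 1) * g = u * ((a - 1) * (a + 1)) + m * ((a + 1) * v)" .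
  with sq have mg: "m dvd (a + 1) * g"
    by simp
  obtain x y where xy: "x * b + y * g = e"
    using bezout_int[of b g] unfolding e_def by blast
  have "(a + 1) * e = (a + 1) * (x * b + y * g)"
    by (simp add: xy)
  also have "\<dots> = x * ((a + 1) * b) + y * ((a + 1) * g)"
    by (simp add: algebra_simps)
  finally have "(a + 1) * e = x * ((a + 1) * b) + y * ((a + 1) * g)" .
  with b mg have "m dvd (a + 1) * e"
    by simp
  moreover have "(a mod m + 1) * e = (a + 1) * e - m * ((a div m) * e)"
    by (simp add: minus_div_mult_eq_mod[symmetric] algebra_simps)
  ultimately have "m dvd (a mod m + 1) * e"
    by simp
  moreover have "e > 0" "e dvd m"
    using m by (auto simp: e_def g_def intro: dvd_trans)
  ultimately show ?thesis
    using m \<open>e dvd a mod m - 1\<close> by (simp add: mem_involution_data_iff e_def g_def)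
qed

lemma aff_class_aff_normal_form:
  assumes m: "m > 0" and a: "coprime a m"
  shows "aff_class m (aff_normal_form m (a, b)) = aff_class m (a, b)"
proof -
  have a': "coprime (a mod m) m"
    using a m by (metis coprime_commute coprime_mod_right_iff less_irrefl)
  have "gcd (gcd b (gcd (a - 1) m)) (gcd (a - 1) m) = gcd b (gcd (a - 1) m)"
    by (simp add: gcd.assoc)
  then have "aff m (a mod m) (gcd b (gcd (a - 1) m)) \<in> conj_class (Hol m) (aff m a b)"
    using m by (simp add: aff_mem_conj_class_iff cong_def)
  then show ?thesis
    using conj_class_eq_iff[OF group_Hol[OF m] aff_in_Hol[OF a] aff_in_Hol[OF a']] by simp
qed

lemma involution_classes_Hol:
  assumes m: "m > 0"
  shows "involution_classes (Hol m) = aff_class m ` involution_data m"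
proof (intro equalityI subsetI)
  fix C
  assume "C \<in> involution_classes (Hol m)"
  then obtain a b where C: "C = aff_class m (a, b)"
    and sq: "m dvd (a - 1) * (a + 1)" and b: "m dvd (a + 1) * b"
    unfolding involution_classes_def involutions_Hol[OF m] by auto
  then have "C = aff_class m (aff_normal_form m (a, b))"
    using aff_class_aff_normal_form[OF m coprime_if_dvd_square_minus_one[OF sq]] by simp
  then show "C \<in> aff_class m ` involution_data m"
    using aff_normal_form_mem_involution_data[OF m sq b] by blast
next
  fix C
  assume "C \<in> aff_class m ` involution_data m"
  then obtain a e where "C = aff_class m (a, e)" "(a, e) \<in> involution_data m"
    by auto
  moreover from this(2) have "m dvd (a - 1) * (a + 1)" "m dvd (a + 1) * e"
    using involution_data_dvd_square_minus_one by (auto simp: mem_involution_data_iff)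
  then have "aff m a e \<in> involutions (Hol m)"
    unfolding involutions_Hol[OF m] by blast
  ultimately show "C \<in> involution_classes (Hol m)"
    by (simp add: involution_classes_def)
qed

lemma inj_on_aff_class:
  assumes m: "m > 0"
  shows "inj_on (aff_class m) (involution_data m)"
proof (rule inj_onI, clarify)
  fix a e a' e'
  assume ae: "(a, e) \<in> involution_data m" and ae': "(a', e') \<in> involution_data m"
    and eq: "aff_class m (a, e) = aff_class m (a', e')"
  have "coprime a m" "coprime a' m"
    using ae ae' by (auto intro: coprime_if_dvd_square_minus_one involution_data_dvd_square_minus_one)
  then have "aff m a' e' \<in> conj_class (Hol m) (aff m a e)"
    using eq conj_class_eq_iff[OF group_Hol[OF m]] aff_in_Hol by (metis aff_class_apply)
  then have "[a' = a] (mod m)" "gcd e' (gcd (a - 1) m) = gcd e (gcd (a - 1) m)"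
    using m by (auto simp: aff_mem_conj_class_iff)
  then show "a = a' \<and> e = e'"
    using ae ae' by (auto simp: mem_involution_data_iff cong_def gcd_proj1_iff)
qed

lemma card_involution_classes_Hol:
  assumes "m > 0"
  shows "card (involution_classes (Hol m)) = card (involution_data m)"
  using involution_classes_Hol[OF assms] card_image[OF inj_on_aff_class[OF assms]] by simp

lemma involution_classes_Hol_eq_image:
  assumes m: "m > 0"
    and R: "\<And>a b. (a, b) \<in> R \<Longrightarrow> m dvd (a - 1) * (a + 1) \<and> m dvd (a + 1) * b"
    and normal_forms: "aff_normal_form m ` R = involution_data m"
  shows "involution_classes (Hol m) = aff_class m ` R"
proof -
  have "aff_class m ` R = aff_class m ` aff_normal_form m ` R"
    unfolding image_image
    using R aff_class_aff_normal_form[OF m] coprime_if_dvd_square_minus_one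
    by (intro image_cong) auto
  then show ?thesis
    unfolding normal_forms involution_classes_Hol[OF m] ..
qed

section \<open>Normal forms modulo prime powers\<close>

lemma dvd_bounded_cases:
  fixes h x :: int
  assumes "h > 0" "h dvd x" "- h < x" "x < 2 * h"
  shows "x = 0 \<or> x = h"
proof -
  obtain t where t: "x = h * t"
    using assms(2) by (auto simp: dvd_def)
  have "h * (- 1) < h * t" "h * t < h * 2"
    using assms t by (simp_all add: mult.commute)
  then have "- 1 < t" "t < 2"
    using assms(1) mult_less_cancel_left_pos by blast+
  then show ?thesis
    using t by auto
qed

lemma involution_data_2: "involution_data 2 = {(1, 1), (1, 2)}"
proof (intro equalityI subsetI)
  fix x
  assume "x \<in> involution_data 2"
  then obtain a e where x: "x = (a, e)" and ae: "(a, e) \<in> involution_data 2"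
    by (cases x) auto
  then have "a \<in> {0..1}" "e \<in> {1..2}"
    using zdvd_imp_le[of e 2] by (auto simp: mem_involution_data_iff)
  then have "a = 0 \<or> a = 1" "e = 1 \<or> e = 2"
    by auto
  with ae show "x \<in> {(1, 1), (1, 2)}"
    unfolding x by (auto simp: mem_involution_data_iff)
qed (auto simp: mem_involution_data_iff)

lemma involution_data_4: "involution_data 4 = {(1, 2), (1, 4), (3, 1), (3, 2)}"
proof (intro equalityI subsetI)
  fix x
  assume "x \<in> involution_data 4"
  then obtain a e where x: "x = (a, e)" and ae: "(a, e) \<in> involution_data 4"
    by (cases x) auto
  then have "a \<in> {0..3}" "e \<in> {1..4}"
    using zdvd_imp_le[of e 4] by (auto simp: mem_involution_data_iff)
  then have "a = 0 \<or> a = 1 \<or> a = 2 \<or> a = 3" "e = 1 \<or> e = 2 \<or> e = 3 \<or> e = 4"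
    by auto
  with ae show "x \<in> {(1, 2), (1, 4), (3, 1), (3, 2)}"
    unfolding x by (auto simp: mem_involution_data_iff)
qed (auto simp: mem_involution_data_iff)

lemma odd_prime_power_dvd_square_minus_one:
  fixes q a :: int
  assumes q: "prime q" "q \<noteq> 2" and dvd: "q ^ k dvd (a - 1) * (a + 1)"
  shows "q ^ k dvd a - 1 \<or> q ^ k dvd a + 1"
proof (cases "q dvd a - 1")
  case True
  have "\<not> q dvd a + 1"
  proof
    assume "q dvd a + 1"
    with True have "q dvd (a + 1) - (a - 1)"
      by (rule dvd_diff[rotated])
    then have "q dvd 2"
      by simp
    with q show False
      using primes_dvd_imp_eq[OF q(1) two_is_prime] by simp
  qed
  then have "coprime (q ^ k) (a + 1)"
    using prime_imp_power_coprime[OF q(1)] coprime_commute by blast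
  with dvd show ?thesis
    by (simp add: coprime_dvd_mult_left_iff)
next
  case False
  then have "coprime (q ^ k) (a - 1)"
    using prime_imp_power_coprime[OF q(1)] coprime_commute by blast
  with dvd show ?thesis
    by (simp add: coprime_dvd_mult_right_iff)
qed

lemma involution_data_odd_fst_one:
  assumes "odd m" "m > 1" and ae: "(a, e) \<in> involution_data m" and "m dvd a - 1"
  shows "(a, e) = (1, m)"
proof -
  note mem = ae[unfolded mem_involution_data_iff]
  then have a: "a = 1"
    using dvd_bounded_cases[of m "a - 1"] \<open>m dvd a - 1\<close> \<open>m > 1\<close> by auto
  have "coprime m 2"
    using \<open>odd m\<close> by simp
  moreover have "m dvd 2 * e"
    using mem a by simp
  ultimately have "m dvd e"
    by (simp add: coprime_dvd_mult_right_iff)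
  then have "e = m"
    using mem by (simp add: zdvd_antisym_nonneg)
  with a show ?thesis
    by simp
qed

lemma involution_data_odd_fst_minus_one:
  assumes "odd m" "m > 1" and ae: "(a, e) \<in> involution_data m" and "m dvd a + 1"
  shows "(a, e) = (m - 1, 1)"
proof -
  note mem = ae[unfolded mem_involution_data_iff]
  have "m dvd (a + 1) - m"
    using \<open>m dvd a + 1\<close> by (simp add: dvd_diff)
  then have a: "a = m - 1"
    using dvd_bounded_cases[of m "(a + 1) - m"] mem \<open>m > 1\<close> by auto
  have "e dvd m - (a - 1)"
    using mem by (simp add: dvd_diff)
  then have "e dvd 2"
    using a by simp
  then have "e = 1 \<or> e = 2"
    using mem zdvd_imp_le[of e 2] by auto
  with mem \<open>odd m\<close> have "e = 1"
    by auto
  with a show ?thesis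
    by simp
qed

lemma involution_data_odd_prime_power:
  fixes q :: int
  assumes q: "prime q" "q > 2" and k: "k \<ge> 1"
  shows "involution_data (q ^ k) = {(1, q ^ k), (q ^ k - 1, 1)}"
proof -
  define m where "m = q ^ k"
  have "q ^ 1 \<le> q ^ k"
    using k q(2) by (intro power_increasing) auto
  then have m3: "m > 2"
    using q(2) by (simp add: m_def)
  have "odd q"
    using primes_dvd_imp_eq[OF two_is_prime q(1)] q(2) by auto
  then have "odd m"
    by (simp add: m_def)
  have "(a, e) \<in> {(1, m), (m - 1, 1)}" if ae: "(a, e) \<in> involution_data m" for a e
  proof -
    have "m dvd a - 1 \<or> m dvd a + 1"
      unfolding m_def
      using odd_prime_power_dvd_square_minus_one[OF q(1)] q(2)
        involution_data_dvd_square_minus_one[OF ae[unfolded m_def]] by simp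
    then show ?thesis
      using involution_data_odd_fst_one involution_data_odd_fst_minus_one \<open>odd m\<close> m3 ae
      by fastforce
  qed
  moreover have "{(1, m), (m - 1, 1)} \<subseteq> involution_data m"
    using m3 by (simp add: mem_involution_data_iff)
  ultimately have "involution_data m = {(1, m), (m - 1, 1)}"
    by auto
  then show ?thesis
    unfolding m_def .
qed

lemma two_power_dvd_square_minus_one:
  fixes a :: int
  assumes dvd: "2 ^ (j + 2) dvd (a - 1) * (a + 1)"
  shows "2 ^ (j + 1) dvd a - 1 \<or> 2 ^ (j + 1) dvd a + 1"
proof -
  have "2 dvd (a - 1) * (a + 1)"
    using dvd by (rule dvd_trans[rotated]) simp
  then have "even (a - 1)"
    by auto
  then obtain u where u: "a - 1 = 2 * u"
    by blast
  have a: "a = 2 * u + 1"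
    using u by simp
  have "2 ^ j * 4 dvd (u * (u + 1)) * 4"
    using dvd unfolding a by (simp add: power_add algebra_simps)
  then have dvd_u: "2 ^ j dvd u * (u + 1)"
    using dvd_mult_cancel_right[of "2 ^ j" 4 "u * (u + 1)"] by simp
  show ?thesis
  proof (cases "even u")
    case True
    then have "coprime (2 ^ j) (u + 1)"
      using prime_imp_power_coprime[OF two_is_prime, of "u + 1" j] coprime_commute by auto
    with dvd_u have "2 ^ j dvd u"
      by (simp add: coprime_dvd_mult_left_iff)
    then show ?thesis
      by (simp add: u)
  next
    case False
    then have "coprime (2 ^ j) u"
      using prime_imp_power_coprime[OF two_is_prime, of u j] coprime_commute by auto
    with dvd_u have "2 ^ j dvd u + 1"
      by (simp add: coprime_dvd_mult_right_iff)
    then have "2 * 2 ^ j dvd 2 * (u + 1)"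
      by (rule mult_dvd_mono[OF dvd_refl])
    then show ?thesis
      by (simp add: a algebra_simps)
  qed
qed

lemma involution_data_four_times_two_power_fst:
  fixes w :: int
  assumes w: "w = 2 ^ j" and ae: "(a, e) \<in> involution_data (4 * w)"
  shows "a = 1 \<or> a = 4 * w - 1 \<or> a = 2 * w + 1 \<or> a = 2 * w - 1"
proof -
  note mem = ae[unfolded mem_involution_data_iff]
  have "w > 0"
    using w by simp
  have "2 * w dvd a - 1 \<or> 2 * w dvd a + 1"
    using two_power_dvd_square_minus_one[of j a] involution_data_dvd_square_minus_one[OF ae]
    by (simp add: w power_add)
  then show ?thesis
  proof
    assume "2 * w dvd a - 1"
    then show ?thesis
      using dvd_bounded_cases[of "2 * w" "a - 1"] mem \<open>w > 0\<close> by auto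
  next
    assume "2 * w dvd a + 1"
    then have "2 * w dvd (a + 1) - 2 * w"
      by (simp add: dvd_diff)
    then show ?thesis
      using dvd_bounded_cases[of "2 * w" "(a + 1) - 2 * w"] mem \<open>w > 0\<close> by auto
  qed
qed

lemma involution_data_half_plus_one_snd:
  fixes w :: int
  assumes "even w" "w > 0" and ae: "(2 * w + 1, e) \<in> involution_data (4 * w)"
  shows "e = 2 * w"
proof -
  note mem = ae[unfolded mem_involution_data_iff]
  have "coprime (2 * w) (w + 1)"
    using assms(1) by (simp add: coprime_commute)
  moreover have "2 * w * 2 dvd (w + 1) * e * 2"
    using mem by (simp add: algebra_simps)
  then have "2 * w dvd (w + 1) * e"
    using dvd_mult_cancel_right[of "2 * w" 2 "(w + 1) * e"] by simp
  ultimately have "2 * w dvd e"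
    by (simp add: coprime_dvd_mult_right_iff)
  moreover have "e dvd 2 * w"
    using mem by simp
  ultimately show "e = 2 * w"
    using mem assms(2) by (simp add: zdvd_antisym_nonneg)
qed

lemma involution_data_half_minus_one_snd:
  fixes w :: int
  assumes "even w" "w > 0" and ae: "(2 * w - 1, e) \<in> involution_data (4 * w)"
  shows "e = 2"
proof -
  note mem = ae[unfolded mem_involution_data_iff]
  have "4 * w = (2 * w) * 2" "(2 * w - 1 + 1) * e = (2 * w) * e"
    by simp_all
  then have "(2 * w) * 2 dvd (2 * w) * e"
    using mem by metis
  then have "2 dvd e"
    using assms(2) by (subst (asm) dvd_mult_cancel_left) auto
  then obtain f where f: "e = 2 * f"
    by blast
  have "2 * f dvd 2 * (w - 1)"
    using mem by (simp add: f algebra_simps)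
  then have "f dvd w - 1"
    by (subst (asm) dvd_mult_cancel_left) simp
  have "2 * f dvd 2 * (2 * w)"
    using mem by (simp add: f algebra_simps)
  then have "f dvd 2 * w"
    by (subst (asm) dvd_mult_cancel_left) simp
  moreover have "f dvd 2 * (w - 1)"
    using \<open>f dvd w - 1\<close> by (rule dvd_mult)
  ultimately have "f dvd 2 * w - 2 * (w - 1)"
    by (rule dvd_diff)
  then have "f dvd 2"
    by simp
  moreover have "f \<noteq> 2"
  proof
    assume "f = 2"
    with \<open>f dvd w - 1\<close> have "even (w - 1)"
      by simp
    with assms(1) show False
      by presburger
  qed
  ultimately have "f = 1"
    using mem zdvd_imp_le[of f 2] by (auto simp: f)
  then show ?thesis
    by (simp add: f)
qed

lemma involution_data_four_times_two_power:
  fixes w :: int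
  assumes w: "w = 2 ^ j" "j \<ge> 1"
  shows "involution_data (4 * w) =
           {(1, 2 * w), (1, 4 * w), (4 * w - 1, 1), (4 * w - 1, 2), (2 * w + 1, 2 * w), (2 * w - 1, 2)}"
    (is "_ = ?N")
proof -
  have "(2::int) ^ 1 \<le> 2 ^ j"
    using w by (intro power_increasing) auto
  then have w2: "w \<ge> 2"
    using w by simp
  have "even w"
    using w by simp
  show ?thesis
  proof (intro equalityI subsetI)
    fix x
    assume "x \<in> involution_data (4 * w)"
    then obtain a e where x: "x = (a, e)" and ae: "(a, e) \<in> involution_data (4 * w)"
      by (cases x) auto
    note mem = ae[unfolded mem_involution_data_iff]
    consider "a = 1" | "a = 4 * w - 1" | "a = 2 * w + 1" | "a = 2 * w - 1"
      using involution_data_four_times_two_power_fst[OF w(1) ae] by blast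
    then show "x \<in> ?N"
    proof cases
      case 1
      then have "2 * w * 2 dvd e * 2"
        using mem by (simp add: algebra_simps)
      then have "2 * w dvd e - 2 * w"
        using dvd_mult_cancel_right[of "2 * w" 2 e] by (simp add: dvd_diff)
      then have "e = 2 * w \<or> e = 4 * w"
        using dvd_bounded_cases[of "2 * w" "e - 2 * w"] mem w2 zdvd_imp_le[of e "4 * w"] by auto
      then show ?thesis
        using x 1 by auto
    next
      case 2
      have "e dvd 4 * w - (a - 1)"
        by (rule dvd_diff) (use mem in auto)
      then have "e = 1 \<or> e = 2"
        using 2 mem zdvd_imp_le[of e 2] by auto
      then show ?thesis
        using x 2 by auto
    qed (use x ae w2 \<open>even w\<close> involution_data_half_plus_one_snd
        involution_data_half_minus_one_snd in auto)
  next
    have "(2 * w + 1 - 1) * (2 * w + 1 + 1) = 4 * w * (w + 1)"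
      by (simp add: algebra_simps)
    moreover have "(2 * w - 1 + 1) * 2 = 4 * w"
      by simp
    moreover have "4 * w - 1 - 1 = 2 * (2 * w - 1)" "2 * w - 1 - 1 = 2 * (w - 1)"
      by simp_all
    ultimately show "x \<in> involution_data (4 * w)" if "x \<in> ?N" for x
      using that w2 by (auto simp: mem_involution_data_iff intro: dvdI)
  qed
qed

section \<open>Multiplicativity\<close>

lemma involution_conditions_cong:
  fixes a a' e m :: int
  assumes cong: "[a = a'] (mod m)" and e: "e dvd m"
  shows "e dvd a - 1 \<longleftrightarrow> e dvd a' - 1"
    and "m dvd (a + 1) * e \<longleftrightarrow> m dvd (a' + 1) * e"
proof -
  have "[a - 1 = a' - 1] (mod e)"
    using cong_dvd_modulus[OF cong e] by (intro cong_diff cong_refl)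
  then show "e dvd a - 1 \<longleftrightarrow> e dvd a' - 1"
    by (rule cong_dvd_iff)
  have "[(a + 1) * e = (a' + 1) * e] (mod m)"
    using cong by (intro cong_mult cong_add cong_refl)
  then show "m dvd (a + 1) * e \<longleftrightarrow> m dvd (a' + 1) * e"
    by (rule cong_dvd_iff)
qed

lemma involution_data_mod_divisor:
  fixes m m' a e :: int
  assumes ae: "(a, e) \<in> involution_data m" and m': "m' dvd m" "m' > 0"
  shows "(a mod m', gcd e m') \<in> involution_data m'"
proof -
  note mem = ae[unfolded mem_involution_data_iff]
  have cong: "[a mod m' = a] (mod m')"
    by (simp add: cong_def)
  have "gcd e m' dvd a - 1"
    using mem by (meson dvd_trans gcd_dvd1)
  then have "gcd e m' dvd a mod m' - 1"
    using involution_conditions_cong(1)[OF cong] by simp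
  have "m' dvd gcd ((a + 1) * e) ((a + 1) * m')"
    using mem m'(1) by (simp add: dvd_trans)
  then have "m' dvd \<bar>(a + 1) * gcd e m'\<bar>"
    by (simp add: gcd_mult_distrib_int[symmetric] abs_mult)
  then have "m' dvd (a + 1) * gcd e m'"
    by simp
  then have "m' dvd (a mod m' + 1) * gcd e m'"
    using involution_conditions_cong(2)[OF cong] by simp
  with \<open>gcd e m' dvd a mod m' - 1\<close> show ?thesis
    using m' by (simp add: mem_involution_data_iff)
qed

lemma gcd_mult_gcd_eq_if_coprime:
  fixes e m1 m2 :: int
  assumes "e > 0" "e dvd m1 * m2" "coprime m1 m2"
  shows "gcd e m1 * gcd e m2 = e"
proof -
  have "coprime (gcd e m1) (gcd e m2)"
    using gcd_dvd2 gcd_dvd2 assms(3) by (rule coprime_divisors)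
  then have "gcd e m1 * gcd e m2 dvd e"
    by (simp add: divides_mult)
  moreover obtain x y u v where xy: "x * e + y * m1 = gcd e m1" and uv: "u * e + v * m2 = gcd e m2"
    using bezout_int by metis
  have "gcd e m1 * gcd e m2 = e * (x * u * e + x * v * m2 + y * m1 * u) + (y * v) * (m1 * m2)"
    unfolding xy[symmetric] uv[symmetric] by (simp add: algebra_simps)
  then have "e dvd gcd e m1 * gcd e m2"
    using assms(2) by simp
  ultimately show ?thesis
    using assms(1) by (simp add: zdvd_antisym_nonneg)
qed

lemma mult_mem_involution_data:
  fixes m1 m2 :: int
  assumes m: "coprime m1 m2" and a: "0 \<le> a" "a < m1 * m2"
    and ae1: "(a1, e1) \<in> involution_data m1" and a1: "[a = a1] (mod m1)"
    and ae2: "(a2, e2) \<in> involution_data m2" and a2: "[a = a2] (mod m2)"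
  shows "(a, e1 * e2) \<in> involution_data (m1 * m2)"
proof -
  note mem1 = ae1[unfolded mem_involution_data_iff]
  note mem2 = ae2[unfolded mem_involution_data_iff]
  have "e1 dvd m1" "e2 dvd m2"
    using mem1 mem2 by simp_all
  then have "coprime e1 e2"
    using m by (rule coprime_divisors)
  have "e1 dvd a - 1" "m1 dvd (a + 1) * e1"
    using mem1 involution_conditions_cong[OF a1 \<open>e1 dvd m1\<close>] by blast+
  have "e2 dvd a - 1" "m2 dvd (a + 1) * e2"
    using mem2 involution_conditions_cong[OF a2 \<open>e2 dvd m2\<close>] by blast+
  have "e1 * e2 dvd a - 1"
    using \<open>coprime e1 e2\<close> \<open>e1 dvd a - 1\<close> \<open>e2 dvd a - 1\<close> by (simp add: divides_mult)
  moreover have "m1 dvd (a + 1) * e1 * e2" "m2 dvd (a + 1) * e2 * e1"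
    using \<open>m1 dvd (a + 1) * e1\<close> \<open>m2 dvd (a + 1) * e2\<close> by simp_all
  then have "m1 dvd (a + 1) * (e1 * e2)" "m2 dvd (a + 1) * (e1 * e2)"
    by (simp_all add: ac_simps)
  then have "m1 * m2 dvd (a + 1) * (e1 * e2)"
    using m by (simp add: divides_mult)
  ultimately show ?thesis
    using a mem1 mem2 by (simp add: mem_involution_data_iff mult_dvd_mono)
qed

lemma involution_data_chinese_remainder:
  fixes m1 m2 :: int
  assumes m: "m1 > 0" "m2 > 0" "coprime m1 m2"
    and ae1: "(a1, e1) \<in> involution_data m1" and ae2: "(a2, e2) \<in> involution_data m2"
  obtains a e where "(a, e) \<in> involution_data (m1 * m2)"
    "(a mod m1, gcd e m1) = (a1, e1)" "(a mod m2, gcd e m2) = (a2, e2)"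
proof -
  note mem1 = ae1[unfolded mem_involution_data_iff]
  note mem2 = ae2[unfolded mem_involution_data_iff]
  obtain x where x: "[x = a1] (mod m1)" "[x = a2] (mod m2)"
    using binary_chinese_remainder_int[OF m(3)] by blast
  define a where "a = x mod (m1 * m2)"
  have "[a = x] (mod m1 * m2)"
    by (simp add: a_def cong_def)
  then have "[a = x] (mod m1)" "[a = x] (mod m2)"
    by (auto elim: cong_dvd_modulus)
  then have a1: "[a = a1] (mod m1)" and a2: "[a = a2] (mod m2)"
    using x by (auto elim: cong_trans)
  have "0 \<le> a" "a < m1 * m2"
    using m by (simp_all add: a_def)
  then have "(a, e1 * e2) \<in> involution_data (m1 * m2)"
    using mult_mem_involution_data[OF m(3)] ae1 a1 ae2 a2 by blast
  moreover have "a mod m1 = a1" "a mod m2 = a2"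
    using a1 a2 mem1 mem2 by (simp_all add: cong_def)
  moreover have "coprime m1 e2" "coprime e1 m2"
    using coprime_divisors[OF dvd_refl _ m(3), of e2] coprime_divisors[OF _ dvd_refl m(3), of e1]
      mem1 mem2 by simp_all
  then have "gcd (e1 * e2) m1 = e1" "gcd (e1 * e2) m2 = e2"
    using mem1 mem2
    by (simp_all add: gcd_mult_left_right_cancel coprime_commute gcd_mult_left_left_cancel gcd_proj1_iff)
  ultimately show ?thesis
    using that by simp
qed

definition involution_data_split :: "int \<Rightarrow> int \<Rightarrow> int \<times> int \<Rightarrow> (int \<times> int) \<times> (int \<times> int)" where
  "involution_data_split m1 m2 = (\<lambda>(a, e). ((a mod m1, gcd e m1), (a mod m2, gcd e m2)))"

lemma inj_on_involution_data_split:
  fixes m1 m2 :: int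
  assumes m: "coprime m1 m2"
  shows "inj_on (involution_data_split m1 m2) (involution_data (m1 * m2))"
proof (rule inj_onI, clarify)
  fix a e a' e'
  assume ae: "(a, e) \<in> involution_data (m1 * m2)" and ae': "(a', e') \<in> involution_data (m1 * m2)"
    and eq: "involution_data_split m1 m2 (a, e) = involution_data_split m1 m2 (a', e')"
  then have "a mod m1 = a' mod m1" "a mod m2 = a' mod m2"
    and gcd: "gcd e m1 = gcd e' m1" "gcd e m2 = gcd e' m2"
    by (simp_all add: involution_data_split_def)
  then have "[a = a'] (mod m1 * m2)"
    using m by (intro coprime_cong_mult) (auto simp: cong_def)
  then have "a = a'"
    using ae ae' by (simp add: mem_involution_data_iff cong_def)
  moreover have "e > 0" "e dvd m1 * m2" "e' > 0" "e' dvd m1 * m2"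
    using ae ae' by (simp_all add: mem_involution_data_iff)
  then have "e = e'"
    using gcd_mult_gcd_eq_if_coprime[OF _ _ m] gcd by metis
  ultimately show "a = a' \<and> e = e'"
    by simp
qed

lemma involution_data_split_image:
  fixes m1 m2 :: int
  assumes m: "m1 > 0" "m2 > 0" "coprime m1 m2"
  shows "involution_data_split m1 m2 ` involution_data (m1 * m2) = involution_data m1 \<times> involution_data m2"
proof (intro equalityI subsetI)
  fix z
  assume "z \<in> involution_data_split m1 m2 ` involution_data (m1 * m2)"
  then obtain a e where z: "z = involution_data_split m1 m2 (a, e)"
    and ae: "(a, e) \<in> involution_data (m1 * m2)"
    by auto
  have "(a mod m1, gcd e m1) \<in> involution_data m1" "(a mod m2, gcd e m2) \<in> involution_data m2"
    using involution_data_mod_divisor[OF ae] m by simp_all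
  then show "z \<in> involution_data m1 \<times> involution_data m2"
    by (simp add: z involution_data_split_def)
next
  fix z
  assume "z \<in> involution_data m1 \<times> involution_data m2"
  then obtain a1 e1 a2 e2 where z: "z = ((a1, e1), (a2, e2))"
    and "(a1, e1) \<in> involution_data m1" "(a2, e2) \<in> involution_data m2"
    by auto
  then obtain a e where "(a, e) \<in> involution_data (m1 * m2)"
    "(a mod m1, gcd e m1) = (a1, e1)" "(a mod m2, gcd e m2) = (a2, e2)"
    using involution_data_chinese_remainder[OF m] by metis
  then show "z \<in> involution_data_split m1 m2 ` involution_data (m1 * m2)"
    unfolding z involution_data_split_def by force
qed

lemma card_involution_data_mult:
  fixes m1 m2 :: int
  assumes "m1 > 0" "m2 > 0" "coprime m1 m2"
  shows "card (involution_data (m1 * m2)) = card (involution_data m1) * card (involution_data m2)"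
  using card_image[OF inj_on_involution_data_split[OF assms(3)]]
  by (simp add: involution_data_split_image[OF assms] card_cartesian_product)

lemma involution_data_1: "involution_data 1 = {(0, 1)}"
  by (auto simp: mem_involution_data_iff)

lemma card_involution_data_two_power: "card (involution_data (2 ^ j)) = min 6 (2 ^ j)"
proof -
  consider "j = 0" | "j = 1" | "j = 2" | "j \<ge> 3"
    by linarith
  then show ?thesis
  proof cases
    case 4
    define i where "i = j - 2"
    have j: "j = i + 2" "i \<ge> 1"
      using 4 by (simp_all add: i_def)
    define w :: int where "w = 2 ^ i"
    have "(2::int) ^ 1 \<le> w"
      using j unfolding w_def by (intro power_increasing) auto
    moreover have "(2::int) ^ j = 4 * w"
      by (simp add: j w_def power_add)
    moreover have "(2::nat) ^ 3 \<le> 2 ^ j"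
      using 4 by (intro power_increasing) auto
    ultimately show ?thesis
      using involution_data_four_times_two_power[OF w_def j(2)] by simp
  qed (simp_all add: involution_data_1 involution_data_2 involution_data_4)
qed

lemma card_involution_data_odd_prime_power:
  assumes "prime q" "q > 2" "j \<ge> 1"
  shows "card (involution_data (int q ^ j)) = 2"
proof -
  have "int q ^ 1 \<le> int q ^ j"
    using assms by (intro power_increasing) auto
  then have "int q \<le> int q ^ j"
    by (simp only: power_one_right)
  then have "int q ^ j > 2"
    using assms(2) by linarith
  then show ?thesis
    using involution_data_odd_prime_power[of "int q" j] assms by simp
qed

lemma card_involution_data_odd:
  fixes n :: nat
  assumes "n > 0" "odd n"
  shows "card (involution_data (int n)) = 2 ^ card (prime_factors n)"
  using assms
proof (induction n rule: less_induct)
  case (less n)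
  show ?case
  proof (cases "n = 1")
    case True
    then show ?thesis
      by (simp add: involution_data_1)
  next
    case False
    then obtain q where q: "prime q" "q dvd n"
      using prime_factor_nat by blast
    define j where "j = multiplicity q n"
    obtain n' where n: "n = q ^ j * n'" and "\<not> q dvd n'"
      using multiplicity_decompose'[of n q] less.prems q(1) unfolding j_def
      by (metis not_prime_unit not_gr0)
    have "n' > 0"
      by (rule gr0I) (use n less.prems in auto)
    have "j \<ge> 1"
      using less.prems q by (simp add: j_def prime_multiplicity_gt_zero_iff Suc_le_eq)
    have "q > 2"
      using q less.prems prime_ge_2_nat[OF q(1)] by (auto simp: le_less dvd_trans)
    have "q ^ j > 1"
      using one_less_power[of q j] \<open>q > 2\<close> \<open>j \<ge> 1\<close> by simp
    then have "n' < n" "odd n'"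
      using n \<open>n' > 0\<close> less.prems(2) by auto
    have "coprime (q ^ j) n'"
      using \<open>\<not> q dvd n'\<close> q(1) prime_imp_power_coprime coprime_commute by blast
    then have "coprime (int q ^ j) (int n')"
      by (metis coprime_int_iff of_nat_power)
    then have "card (involution_data (int n)) = 2 * card (involution_data (int n'))"
      using card_involution_data_mult[of "int q ^ j" "int n'"] \<open>n' > 0\<close> q(1) n
        card_involution_data_odd_prime_power[OF q(1) \<open>q > 2\<close> \<open>j \<ge> 1\<close>]
      by (simp add: prime_gt_0_nat)
    moreover have "prime_factors n = insert q (prime_factors n')"
      using n q(1) \<open>n' > 0\<close> \<open>j \<ge> 1\<close>
      by (simp add: prime_factors_product prime_factorization_prime_power prime_gt_0_nat)
    moreover have "q \<notin> prime_factors n'"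
      using \<open>\<not> q dvd n'\<close> by (simp add: in_prime_factors_iff)
    ultimately show ?thesis
      using less.IH[OF \<open>n' < n\<close> \<open>n' > 0\<close> \<open>odd n'\<close>] by simp
  qed
qed

lemma card_involution_data:
  fixes m :: nat
  assumes "m > 0"
  shows "card (involution_data (int m)) =
           min 6 (2 ^ multiplicity 2 m) * 2 ^ card {p. prime p \<and> p > 2 \<and> p dvd m}"
proof -
  define \<nu> where "\<nu> = multiplicity 2 m"
  obtain n where m: "m = 2 ^ \<nu> * n" and "odd n"
    using multiplicity_decompose'[of m 2] assms unfolding \<nu>_def by auto
  have "n > 0"
    using m assms by auto
  have "coprime (2 ^ \<nu>) (int n)"
    using \<open>odd n\<close> by simp
  then have "card (involution_data (int m)) = min 6 (2 ^ \<nu>) * 2 ^ card (prime_factors n)"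
    using card_involution_data_mult[of "2 ^ \<nu>" "int n"] \<open>n > 0\<close> \<open>odd n\<close>
    by (simp add: m card_involution_data_two_power card_involution_data_odd)
  moreover have "{p. prime p \<and> p > 2 \<and> p dvd m} = prime_factors n"
  proof -
    have "p dvd n \<longleftrightarrow> p dvd m" if "prime p" "p > 2" for p
      using that m prime_dvd_mult_iff prime_dvd_power primes_dvd_imp_eq two_is_prime_nat
      by (metis less_irrefl dvd_mult)
    moreover have "p > 2" if "prime p" "p dvd n" for p
      using that \<open>odd n\<close> prime_ge_2_nat[of p] by (auto simp: le_less dvd_trans)
    ultimately show ?thesis
      using \<open>n > 0\<close> by (auto simp: in_prime_factors_iff)
  qed
  ultimately show ?thesis
    by (simp add: \<nu>_def)
qed

section \<open>Representatives\<close>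

lemma involution_classes_Hol_odd_prime_power:
  fixes p k :: nat
  assumes p: "prime p" "p > 2" and k: "k \<ge> 1"
  defines "m \<equiv> int p ^ k"
  shows "involution_classes (Hol m) = {conj_class (Hol m) (aff m 1 0), conj_class (Hol m) (aff m (-1) 0)}
    \<and> card (involution_classes (Hol m)) = 2"
proof -
  have D: "involution_data m = {(1, m), (m - 1, 1)}"
    unfolding m_def using involution_data_odd_prime_power[of "int p" k] p k by simp
  have "int p ^ 1 \<le> m"
    unfolding m_def using p k by (intro power_increasing) auto
  then have m2: "m > 2"
    using p(2) by simp
  have "aff_normal_form m (-1, 0) \<in> involution_data m"
    using m2 by (intro aff_normal_form_mem_involution_data) auto
  then have "aff_normal_form m (-1, 0) = (m - 1, 1)"
    using m2 by (simp add: D zmod_minus1)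
  then have "aff_normal_form m ` {(1, 0), (-1, 0)} = involution_data m"
    using m2 by (simp add: D)
  then have "involution_classes (Hol m) = aff_class m ` {(1, 0), (-1, 0)}"
    using m2 by (intro involution_classes_Hol_eq_image) auto
  moreover have "card (involution_classes (Hol m)) = 2"
    using m2 by (simp add: card_involution_classes_Hol D)
  ultimately show ?thesis
    by simp
qed

lemma involution_classes_Hol_2:
  "involution_classes (Hol 2) = {conj_class (Hol 2) (aff 2 1 0), conj_class (Hol 2) (aff 2 1 1)}
    \<and> card (involution_classes (Hol 2)) = 2"
proof -
  have "aff_normal_form 2 ` {(1, 0), (1, 1)} = involution_data 2"
    by (auto simp: involution_data_2)
  then have "involution_classes (Hol 2) = aff_class 2 ` {(1, 0), (1, 1)}"
    by (intro involution_classes_Hol_eq_image) auto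
  moreover have "card (involution_classes (Hol 2)) = 2"
    by (simp add: card_involution_classes_Hol involution_data_2)
  ultimately show ?thesis
    by simp
qed

lemma involution_classes_Hol_4:
  "involution_classes (Hol 4) = {conj_class (Hol 4) (aff 4 1 0), conj_class (Hol 4) (aff 4 1 2),
                                 conj_class (Hol 4) (aff 4 (-1) 0), conj_class (Hol 4) (aff 4 (-1) 1)}
    \<and> card (involution_classes (Hol 4)) = 4"
proof -
  have "aff_normal_form 4 ` {(1, 0), (1, 2), (-1, 0), (-1, 1)} = involution_data 4"
    by (auto simp: involution_data_4)
  then have "involution_classes (Hol 4) = aff_class 4 ` {(1, 0), (1, 2), (-1, 0), (-1, 1)}"
    by (intro involution_classes_Hol_eq_image) auto
  moreover have "card (involution_classes (Hol 4)) = 4"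
    by (simp add: card_involution_classes_Hol involution_data_4)
  ultimately show ?thesis
    by simp
qed

definition two_power_representatives :: "int \<Rightarrow> (int \<times> int) set" where
  "two_power_representatives w =
     {(1, 0), (1, 2 * w), (-1, 0), (-1, 1), (2 * w - 1, 0), (2 * w + 1, 0)}"

lemma two_power_representatives_involutive:
  fixes w :: int
  assumes "(a, b) \<in> two_power_representatives w"
  shows "4 * w dvd (a - 1) * (a + 1) \<and> 4 * w dvd (a + 1) * b"
proof -
  from assms consider "a = 1" "b = 0 \<or> b = 2 * w" | "a = -1"
    | "a = 2 * w - 1" "b = 0" | "a = 2 * w + 1" "b = 0"
    unfolding two_power_representatives_def by auto
  then show ?thesis
  proof cases
    case 3
    have "(a - 1) * (a + 1) = 4 * w * (w - 1)"
      unfolding 3(1) by (simp add: algebra_simps)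
    then have "4 * w dvd (a - 1) * (a + 1)"
      by (rule dvdI)
    with 3(2) show ?thesis
      by simp
  next
    case 4
    have "(a - 1) * (a + 1) = 4 * w * (w + 1)"
      unfolding 4(1) by (simp add: algebra_simps)
    then have "4 * w dvd (a - 1) * (a + 1)"
      by (rule dvdI)
    with 4(2) show ?thesis
      by simp
  qed auto
qed

lemma aff_normal_form_two_power_representatives:
  fixes w :: int
  assumes w: "w = 2 ^ j" "j \<ge> 1"
  shows "aff_normal_form (4 * w) ` two_power_representatives w = involution_data (4 * w)"
proof -
  have "(2::int) ^ 1 \<le> w"
    unfolding w(1) using w(2) by (intro power_increasing) auto
  then have w2: "w \<ge> 2"
    by simp
  have "even w"
    using w by simp
  have mem: "aff_normal_form (4 * w) (a, b) \<in> involution_data (4 * w)"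
    if "(a, b) \<in> two_power_representatives w" for a b
    using two_power_representatives_involutive[OF that] w2
    by (intro aff_normal_form_mem_involution_data) simp_all
  have "(2 * w - 1) mod (4 * w) = 2 * w - 1" "(2 * w + 1) mod (4 * w) = 2 * w + 1"
    using w2 by simp_all
  then have "(2 * w - 1, gcd 0 (gcd (2 * w - 1 - 1) (4 * w))) \<in> involution_data (4 * w)"
    "(2 * w + 1, gcd 0 (gcd (2 * w + 1 - 1) (4 * w))) \<in> involution_data (4 * w)"
    using mem[of "2 * w - 1" 0] mem[of "2 * w + 1" 0] by (simp_all add: two_power_representatives_def)
  then have "aff_normal_form (4 * w) (2 * w - 1, 0) = (2 * w - 1, 2)"
    "aff_normal_form (4 * w) (2 * w + 1, 0) = (2 * w + 1, 2 * w)"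
    using involution_data_half_minus_one_snd involution_data_half_plus_one_snd \<open>even w\<close> w2
      \<open>(2 * w - 1) mod (4 * w) = 2 * w - 1\<close> \<open>(2 * w + 1) mod (4 * w) = 2 * w + 1\<close>
    by simp_all
  moreover have "aff_normal_form (4 * w) (1, 0) = (1, 4 * w)"
    "aff_normal_form (4 * w) (1, 2 * w) = (1, 2 * w)"
    "aff_normal_form (4 * w) (-1, 0) = (4 * w - 1, 2)"
    "aff_normal_form (4 * w) (-1, 1) = (4 * w - 1, 1)"
    using w2 by (simp_all add: zmod_minus1 gcd_proj1_if_dvd)
  ultimately have "aff_normal_form (4 * w) ` two_power_representatives w =
      {(1, 4 * w), (1, 2 * w), (4 * w - 1, 2), (4 * w - 1, 1), (2 * w - 1, 2), (2 * w + 1, 2 * w)}"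
    unfolding two_power_representatives_def by (simp only: image_insert image_empty)
  also have "\<dots> = involution_data (4 * w)"
    unfolding involution_data_four_times_two_power[OF w] by blast
  finally show ?thesis .
qed

lemma involution_classes_Hol_two_power:
  fixes k :: nat
  assumes k: "k \<ge> 3"
  defines "m \<equiv> 2 ^ k"
  shows "involution_classes (Hol m) =
      {conj_class (Hol m) (aff m 1 0), conj_class (Hol m) (aff m 1 (2 ^ (k - 1))),
       conj_class (Hol m) (aff m (-1) 0), conj_class (Hol m) (aff m (-1) 1),
       conj_class (Hol m) (aff m (2 ^ (k - 1) - 1) 0), conj_class (Hol m) (aff m (2 ^ (k - 1) + 1) 0)}
    \<and> card (involution_classes (Hol m)) = 6"
proof -
  define i where "i = k - 2"
  define w :: int where "w = 2 ^ i"
  have k_eq: "k = i + 2" and "i \<ge> 1"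
    using k by (simp_all add: i_def)
  have m: "m = 4 * w" and half: "2 ^ (k - 1) = 2 * w"
    by (simp_all add: m_def w_def k_eq power_add)
  have "m > 0"
    by (simp add: m_def)
  have "involution_classes (Hol m) = aff_class m ` two_power_representatives w"
    using two_power_representatives_involutive aff_normal_form_two_power_representatives[OF w_def]
      \<open>i \<ge> 1\<close> \<open>m > 0\<close> unfolding m by (intro involution_classes_Hol_eq_image) auto
  moreover have "card (involution_classes (Hol m)) = 6"
  proof -
    have "(2::int) ^ 1 \<le> w"
      unfolding w_def using \<open>i \<ge> 1\<close> by (intro power_increasing) auto
    then show ?thesis
      using card_involution_classes_Hol[OF \<open>m > 0\<close>]
      by (simp add: m involution_data_four_times_two_power[OF w_def \<open>i \<ge> 1\<close>])
  qed
  ultimately show ?thesis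
    unfolding half by (simp add: two_power_representatives_def)
qed

theorem lemma5p3:
  shows
  "(\<forall>(p::nat) (k::nat). prime p \<and> p > 2 \<and> k \<ge> 1 \<longrightarrow>
      (let m = int p ^ k; G = Hol m in
        involution_classes G = {conj_class G (aff m 1 0), conj_class G (aff m (-1) 0)}
        \<and> card (involution_classes G) = 2))
   \<and> (let m = 2; G = Hol m in
        involution_classes G = {conj_class G (aff m 1 0), conj_class G (aff m 1 1)}
        \<and> card (involution_classes G) = 2)
   \<and> (let m = 4; G = Hol m in
        involution_classes G = {conj_class G (aff m 1 0), conj_class G (aff m 1 2),
                                conj_class G (aff m (-1) 0), conj_class G (aff m (-1) 1)}
        \<and> card (involution_classes G) = 4)
   \<and> (\<forall>k::nat. k \<ge> 3 \<longrightarrow>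
      (let m = 2 ^ k; G = Hol m in
        involution_classes G = {conj_class G (aff m 1 0), conj_class G (aff m 1 (2 ^ (k - 1))),
                                conj_class G (aff m (-1) 0), conj_class G (aff m (-1) 1),
                                conj_class G (aff m (2 ^ (k - 1) - 1) 0),
                                conj_class G (aff m (2 ^ (k - 1) + 1) 0)}
        \<and> card (involution_classes G) = 6))
   \<and> (\<forall>m::nat. m > 0 \<longrightarrow>
      card (involution_classes (Hol (int m))) =
        min 6 (2 ^ multiplicity 2 m) * 2 ^ card {p. prime p \<and> p > 2 \<and> p dvd m})"
  apply (intro conjI allI impI)
  subgoal unfolding Let_def by (intro involution_classes_Hol_odd_prime_power) auto
  subgoal unfolding Let_def by (rule involution_classes_Hol_2)
  subgoal unfolding Let_def by (rule involution_classes_Hol_4)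
  subgoal unfolding Let_def by (rule involution_classes_Hol_two_power)
  subgoal by (simp add: card_involution_classes_Hol card_involution_data)
  done

end
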